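(* Let $N,s$ be integers with $N>2$ and $1\le s<N$. For $\lambda\in\left[\frac{\pi}{2}-\frac{\pi}{2N}s,\frac{\pi}{2}\right)$ let $C^0(s,\lambda):=\arcsin\left(\tan\left(\frac{\pi}{2}-\frac{\pi}{2N}s\right)/\tan\lambda\right)$ and $t^0(s,\lambda):=-\frac{N}{\pi}\beta(\lambda,C^0(s,\lambda))$, where $\beta(\lambda,\varphi)=\varphi-2\arctan\left(\frac{\cos\frac{\lambda}{2}\sin\varphi}{\sin\frac{\lambda}{2}+\cos\frac{\lambda}{2}\cos\varphi}\right)$ (as a real number). Then $t^0(s,-)$ is strictly decreasing, hence injective, on $\left[\frac{\pi}{2}-\frac{\pi}{2N}s,\frac{\pi}{2}\right)$, and its image of this interval is $(0,\frac{s}{2}]$.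
   Context: Explicitly, $\beta(\lambda,C^0(s,\lambda))=\arcsin\left(\cot\left(\frac{\pi}{2N}s\right)\cot\lambda\right)-2\arctan\left(\frac{\cos\frac{\lambda}{2}\cot\left(\frac{\pi}{2N}s\right)\cot\lambda}{\sqrt{1-\cot^2\left(\frac{\pi}{2N}s\right)\cot^2\lambda}\,\cos\frac{\lambda}{2}+\sin\frac{\lambda}{2}}\right)$. *)

theory Defs
  imports Complex_Main
begin

definition beta :: "real \<Rightarrow> real \<Rightarrow> real" where
  "beta lam phi = phi - 2 * arctan (cos (lam/2) * sin phi / (sin (lam/2) + cos (lam/2) * cos phi))"

definition C0 :: "nat \<Rightarrow> nat \<Rightarrow> real \<Rightarrow> real" where
  "C0 N s lam = arcsin (tan (pi/2 - pi / (2 * real N) * real s) / tan lam)"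

definition t0 :: "nat \<Rightarrow> nat \<Rightarrow> real \<Rightarrow> real" where
  "t0 N s lam = - (real N / pi) * beta lam (C0 N s lam)"

end

(*
  Put u = tan (phi/2) and q = tan (pi/4 - lam/2) = (cos (lam/2) - sin (lam/2)) / (cos (lam/2) + sin (lam/2)).
  The argument of the arctan in beta equals u (1 + q) / (1 - q u^2) = tan (phi/2 + arctan (q u)),
  so beta lam phi = -2 arctan (q u) and t0 = (2N/pi) arctan (tan (pi/4 - lam/2) tan (C0/2)).
  For a = pi/2 - pi s/(2N) <= lam < pi/2 the ratio tan a / tan lam decreases from 1 towards 0, so both
  tangent factors are positive and strictly decreasing. The product is continuous on [a, pi/2],
  equals tan (pi/4 - a/2) at lam = a, which gives t0 = s/2, and vanishes at pi/2; the intermediate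
  value theorem then gives the image (0, s/2].
*)

theory Submission
  imports Defs
begin

lemma tan_quarter_pi_diff: "tan (pi/4 - y) = (cos y - sin y) / (cos y + sin y)"
proof -
  have sin_eq: "sin (pi/4 - y) = sqrt 2 / 2 * (cos y - sin y)"
    by (simp add: sin_diff sin_45 cos_45 algebra_simps)
  have cos_eq: "cos (pi/4 - y) = sqrt 2 / 2 * (cos y + sin y)"
    by (simp add: cos_diff sin_45 cos_45 algebra_simps)
  show ?thesis
    unfolding tan_def sin_eq cos_eq by simp
qed

lemma tan_ge_zero: "0 \<le> x \<Longrightarrow> x < pi/2 \<Longrightarrow> 0 \<le> tan (x::real)"
  using tan_mono_le[of 0 x] by simp

lemma abs_tan_le_one:
  fixes x :: real
  assumes "\<bar>x\<bar> \<le> pi/4"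
  shows "\<bar>tan x\<bar> \<le> 1"
proof -
  have x: "- (pi/4) \<le> x" "x \<le> pi/4"
    using assms by (simp_all add: abs_le_iff)
  have "tan (- (pi/4)) \<le> tan x"
    by (rule tan_mono_le) (use x pi_gt_zero in linarith)+
  moreover have "tan x \<le> tan (pi/4)"
    by (rule tan_mono_le) (use x pi_gt_zero in linarith)+
  ultimately show ?thesis
    by (simp add: tan_45 abs_le_iff)
qed

lemma sin_cos_double_quotient:
  fixes c s A :: real
  assumes "cos A \<noteq> 0" "c + s \<noteq> 0"
  defines "q \<equiv> (c - s) / (c + s)" and "u \<equiv> tan A"
  shows "c * sin (2 * A) / (s + c * cos (2 * A)) = (u + q * u) / (1 - u * (q * u))"
proof -
  have sin_A: "sin A = u * cos A"
    using assms(1) by (simp add: u_def tan_def)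
  have one: "1 = (1 + u^2) * (cos A)^2"
    using sin_cos_squared_add[of A] by (simp add: sin_A algebra_simps power2_eq_square)
  have "c * sin (2 * A) = (cos A)^2 * ((c + s) * (u + q * u))"
    unfolding sin_double sin_A using assms(2) by (simp add: q_def field_simps power2_eq_square)
  moreover have "s + c * cos (2 * A) = (cos A)^2 * ((c + s) * (1 - u * (q * u)))"
    unfolding cos_double sin_A using assms(2) one by (simp add: q_def field_simps) algebra
  ultimately show ?thesis
    using assms(1,2) by simp
qed

lemma image_atLeastLessThan_strict_antimono:
  fixes f :: "'a::linear_continuum_topology \<Rightarrow> 'b::linorder_topology"
  assumes "a \<le> b" "continuous_on {a..b} f"
    and decreasing: "\<And>x y. a \<le> x \<Longrightarrow> x < y \<Longrightarrow> y \<le> b \<Longrightarrow> f y < f x"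
  shows "f ` {a..<b} = {f b<..f a}"
proof
  show "f ` {a..<b} \<subseteq> {f b<..f a}"
  proof
    fix z assume "z \<in> f ` {a..<b}"
    then obtain x where x: "a \<le> x" "x < b" "z = f x"
      by auto
    have "f x \<le> f a"
      using x decreasing[of a x] by (cases "a = x") (auto intro: less_imp_le)
    moreover have "f b < f x"
      using x decreasing[of x b] by simp
    ultimately show "z \<in> {f b<..f a}"
      using x by simp
  qed
  show "{f b<..f a} \<subseteq> f ` {a..<b}"
  proof
    fix z assume z: "z \<in> {f b<..f a}"
    then have "f b \<le> z" "z \<le> f a"
      by (auto intro: less_imp_le)
    then obtain x where x: "a \<le> x" "x \<le> b" "f x = z"
      using IVT2' assms(1,2) by blast
    with z have "x \<noteq> b"
      by auto
    with x show "z \<in> f ` {a..<b}"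
      by auto
  qed
qed

lemma beta_eq_arctan_tan_half:
  assumes "0 < lam" "lam < pi" "\<bar>phi\<bar> \<le> pi/2"
  shows "beta lam phi = - 2 * arctan (tan (pi/4 - lam/2) * tan (phi/2))"
proof -
  define c where "c = cos (lam/2)"
  define s where "s = sin (lam/2)"
  define q where "q = tan (pi/4 - lam/2)"
  define u where "u = tan (phi/2)"
  have c: "c > 0" and s: "s > 0"
    unfolding c_def s_def using assms by (auto intro: cos_gt_zero_pi sin_gt_zero)
  have q: "q = (c - s) / (c + s)"
    unfolding q_def c_def s_def by (rule tan_quarter_pi_diff)
  have "\<bar>q\<bar> < 1"
    using c s by (simp add: q abs_less_iff field_simps)
  moreover have "\<bar>u\<bar> \<le> 1"
    unfolding u_def using assms(3) by (intro abs_tan_le_one) simp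
  ultimately have qu: "\<bar>q * u\<bar> < 1"
    using mult_left_le[of "\<bar>u\<bar>" "\<bar>q\<bar>"] by (simp add: abs_mult)
  define A where "A = phi/2"
  define B where "B = arctan (q * u)"
  have "\<bar>A\<bar> \<le> pi/4"
    unfolding A_def using assms(3) by simp
  moreover have "\<bar>B\<bar> < pi/4"
    using qu arctan_less_iff[of "q * u" 1] arctan_less_iff[of "-1" "q * u"]
    by (simp add: B_def arctan_one arctan_minus abs_less_iff)
  ultimately have AB: "- (pi/2) < A + B" "A + B < pi/2" "\<bar>A\<bar> < pi/2"
    by (simp_all add: abs_le_iff abs_less_iff)
  have "cos A > 0" "cos (A + B) > 0"
    using AB by (intro cos_gt_zero_pi; simp add: abs_less_iff)+
  then have "tan (A + B) = (tan A + tan B) / (1 - tan A * tan B)"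
    by (intro tan_add) (simp_all add: B_def)
  also have "\<dots> = (u + q * u) / (1 - u * (q * u))"
    by (simp add: B_def tan_arctan u_def A_def)
  also have "\<dots> = c * sin phi / (s + c * cos phi)"
    using sin_cos_double_quotient[of A c s] \<open>cos A > 0\<close> c s
    by (simp add: A_def q u_def)
  finally have tan_AB: "tan (A + B) = c * sin phi / (s + c * cos phi)" .
  have "arctan (c * sin phi / (s + c * cos phi)) = A + B"
    using arctan_tan[OF AB(1,2)] unfolding tan_AB .
  then show ?thesis
    by (simp add: beta_def c_def s_def A_def B_def q_def u_def)
qed

lemma tan_div_tan_mem_unit_interval:
  fixes a x :: real
  assumes "0 < a" "a \<le> x" "x \<le> pi/2"
  shows "tan a / tan x \<in> {0..1}"
proof (cases "x = pi/2")
  case False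
  then have "0 < tan a" "tan a \<le> tan x"
    using assms by (auto intro: tan_gt_zero tan_mono_le)
  then show ?thesis
    by simp
next
  case True
  show ?thesis
    unfolding True by simp
qed

lemma tan_div_tan_strict_decreasing:
  fixes a x y :: real
  assumes "0 < a" "a \<le> x" "x < y" "y \<le> pi/2"
  shows "tan a / tan y < tan a / tan x"
proof -
  have pos: "0 < tan a" "0 < tan x"
    using assms by (auto intro: tan_gt_zero)
  show ?thesis
  proof (cases "y = pi/2")
    case True
    show ?thesis
      unfolding True using pos by simp
  next
    case False
    then have "tan x < tan y"
      using assms by (intro tan_monotone) auto
    then show ?thesis
      using pos by (intro divide_strict_left_mono) auto
  qed
qed

definition t0_tangent :: "real \<Rightarrow> real \<Rightarrow> real" where
  "t0_tangent a lam = tan (pi/4 - lam/2) * tan (arcsin (tan a / tan lam) / 2)"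

lemma t0_tangent_left: "0 < a \<Longrightarrow> a < pi/2 \<Longrightarrow> t0_tangent a a = tan (pi/4 - a/2)"
  using tan_gt_zero[of a] by (simp add: t0_tangent_def tan_45)

lemma t0_tangent_right: "t0_tangent a (pi/2) = 0"
  by (simp add: t0_tangent_def)

lemma t0_tangent_strict_decreasing:
  fixes a x y :: real
  assumes "0 < a" "a \<le> x" "x < y" "y \<le> pi/2"
  shows "t0_tangent a y < t0_tangent a x"
proof -
  have "tan (pi/4 - y/2) < tan (pi/4 - x/2)" "0 < tan (pi/4 - x/2)"
    using assms by (auto intro: tan_monotone tan_gt_zero)
  moreover have "0 \<le> tan (arcsin (tan a / tan y) / 2)"
    "tan (arcsin (tan a / tan y) / 2) < tan (arcsin (tan a / tan x) / 2)"
  proof -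
    have x: "tan a / tan x \<in> {0..1}" and y: "tan a / tan y \<in> {0..1}"
      using assms by (intro tan_div_tan_mem_unit_interval; simp)+
    then have "0 \<le> arcsin (tan a / tan y)" "arcsin (tan a / tan x) \<le> pi/2"
      using arcsin_nonneg arcsin_ubound[of "tan a / tan x"] by auto
    moreover have "arcsin (tan a / tan y) < arcsin (tan a / tan x)"
      using x y tan_div_tan_strict_decreasing[OF assms] by (intro arcsin_less_arcsin) auto
    ultimately show "0 \<le> tan (arcsin (tan a / tan y) / 2)"
      "tan (arcsin (tan a / tan y) / 2) < tan (arcsin (tan a / tan x) / 2)"
      by (auto intro: tan_monotone tan_ge_zero)
  qed
  ultimately show ?thesis
    unfolding t0_tangent_def by (intro mult_strict_mono) auto
qed

lemma continuous_on_t0_tangent: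
  fixes a :: real
  assumes "0 < a"
  shows "continuous_on {a..pi/2} (t0_tangent a)"
proof -
  have "t0_tangent a = (\<lambda>x. tan (pi/4 - x/2) * tan (arcsin (tan a * cot x) / 2))"
    by (simp add: fun_eq_iff t0_tangent_def cot_def tan_def)
  moreover have "continuous_on {a..pi/2} (\<lambda>x. tan (pi/4 - x/2) * tan (arcsin (tan a * cot x) / 2))"
  proof (intro continuous_intros ballI)
    fix x assume "x \<in> {a..pi/2}"
    then have x: "a \<le> x" "x \<le> pi/2"
      by simp_all
    show "sin x \<noteq> 0"
      by (intro order.strict_implies_not_eq[symmetric] sin_gt_zero) (use x assms pi_gt_zero in linarith)+
    show "cos (pi/4 - x/2) \<noteq> 0"
      by (intro order.strict_implies_not_eq[symmetric] cos_gt_zero_pi) (use x assms in linarith)+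
    have "tan a * cot x = tan a / tan x"
      by (simp add: cot_def tan_def)
    then show bounds: "-1 \<le> tan a * cot x \<and> tan a * cot x \<le> 1"
      using tan_div_tan_mem_unit_interval[OF assms x] by simp
    have "- (pi/2) \<le> arcsin (tan a * cot x)" "arcsin (tan a * cot x) \<le> pi/2"
      using arcsin_bounded[of "tan a * cot x"] bounds by simp_all
    then show "cos (arcsin (tan a * cot x) / 2) \<noteq> 0"
      by (intro order.strict_implies_not_eq[symmetric] cos_gt_zero_pi) (use pi_gt_zero in linarith)+
  qed simp_all
  ultimately show ?thesis
    by (simp only:)
qed

definition lam_min :: "nat \<Rightarrow> nat \<Rightarrow> real" where
  "lam_min N s = pi/2 - pi / (2 * real N) * real s"

lemma lam_min_bounds:
  assumes "1 \<le> s" "s < N"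
  shows "0 < lam_min N s" "lam_min N s < pi/2"
proof -
  have "0 < pi/2 * (real s / real N)" "pi/2 * (real s / real N) < pi/2 * 1"
    using assms by (intro mult_pos_pos mult_strict_left_mono; simp)+
  then show "0 < lam_min N s" "lam_min N s < pi/2"
    by (simp_all add: lam_min_def)
qed

lemma t0_eq_arctan_t0_tangent:
  assumes "1 \<le> s" "s < N" "lam \<in> {lam_min N s..pi/2}"
  shows "t0 N s lam = 2 * real N / pi * arctan (t0_tangent (lam_min N s) lam)"
proof -
  let ?a = "lam_min N s"
  have C0: "C0 N s lam = arcsin (tan ?a / tan lam)"
    by (simp add: C0_def lam_min_def)
  have "tan ?a / tan lam \<in> {-1..1}"
    using tan_div_tan_mem_unit_interval lam_min_bounds[OF assms(1,2)] assms(3) by fastforce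
  then have "\<bar>C0 N s lam\<bar> \<le> pi/2"
    using arcsin_bounded[of "tan ?a / tan lam"] unfolding C0 by auto
  moreover have "0 < lam" "lam < pi"
    using assms(3) lam_min_bounds[OF assms(1,2)] pi_gt_zero by auto
  ultimately show ?thesis
    by (simp add: t0_def beta_eq_arctan_tan_half t0_tangent_def C0)
qed

lemma t0_strict_decreasing:
  assumes "1 \<le> s" "s < N" "lam_min N s \<le> x" "x < y" "y \<le> pi/2"
  shows "t0 N s y < t0 N s x"
proof -
  have "arctan (t0_tangent (lam_min N s) y) < arctan (t0_tangent (lam_min N s) x)"
    using t0_tangent_strict_decreasing lam_min_bounds[OF assms(1,2)] assms(3-5)
    by (simp add: arctan_less_iff)
  then have "2 * real N / pi * arctan (t0_tangent (lam_min N s) y)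
      < 2 * real N / pi * arctan (t0_tangent (lam_min N s) x)"
    using assms(1,2) by (intro mult_strict_left_mono) simp_all
  then show ?thesis
    using assms by (simp add: t0_eq_arctan_t0_tangent)
qed

lemma continuous_on_t0:
  assumes "1 \<le> s" "s < N"
  shows "continuous_on {lam_min N s..pi/2} (t0 N s)"
proof -
  have "continuous_on {lam_min N s..pi/2} (t0 N s) \<longleftrightarrow>
      continuous_on {lam_min N s..pi/2} (\<lambda>lam. 2 * real N / pi * arctan (t0_tangent (lam_min N s) lam))"
    using assms by (intro continuous_on_cong) (simp_all add: t0_eq_arctan_t0_tangent)
  moreover have "continuous_on {lam_min N s..pi/2}
      (\<lambda>lam. 2 * real N / pi * arctan (t0_tangent (lam_min N s) lam))"
    using lam_min_bounds[OF assms] by (intro continuous_intros continuous_on_t0_tangent)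
  ultimately show ?thesis
    by simp
qed

lemma t0_lam_min:
  assumes "1 \<le> s" "s < N"
  shows "t0 N s (lam_min N s) = real s / 2"
proof -
  have "arctan (t0_tangent (lam_min N s) (lam_min N s)) = pi/4 - lam_min N s / 2"
    using lam_min_bounds[OF assms] by (simp add: t0_tangent_left arctan_tan)
  then show ?thesis
    using assms lam_min_bounds[OF assms] by (simp add: t0_eq_arctan_t0_tangent lam_min_def field_simps)
qed

text \<open>Since \<open>tan (pi/2) = 0\<close> in Isabelle, \<open>C0 N s (pi/2) = 0\<close>, which is also the limit from the
  left; this is what makes \<open>t0 N s\<close> continuous on the closed interval.\<close>

lemma t0_pi_half: "t0 N s (pi/2) = 0"
  by (simp add: t0_def C0_def beta_def)

theorem lemma25:
  fixes N s :: nat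
  assumes "N > 2" and "1 \<le> s" and "s < N"
  shows "(\<forall>x\<in>{pi/2 - pi / (2 * real N) * real s ..< pi/2}.
            \<forall>y\<in>{pi/2 - pi / (2 * real N) * real s ..< pi/2}.
              x < y \<longrightarrow> t0 N s y < t0 N s x)
       \<and> inj_on (t0 N s) {pi/2 - pi / (2 * real N) * real s ..< pi/2}
       \<and> t0 N s ` {pi/2 - pi / (2 * real N) * real s ..< pi/2} = {0 <.. real s / 2}"
proof -
  note decreasing = t0_strict_decreasing[OF assms(2,3)]
  have "t0 N s ` {lam_min N s..<pi/2} = {t0 N s (pi/2)<..t0 N s (lam_min N s)}"
    using lam_min_bounds[OF assms(2,3)] continuous_on_t0[OF assms(2,3)] decreasing
    by (intro image_atLeastLessThan_strict_antimono) simp_all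
  also have "\<dots> = {0<..real s / 2}"
    unfolding t0_pi_half t0_lam_min[OF assms(2,3)] ..
  finally have "t0 N s ` {lam_min N s..<pi/2} = {0<..real s / 2}" .
  moreover have "inj_on (t0 N s) {lam_min N s..<pi/2}"
  proof (rule linorder_inj_onI')
    fix x y assume "x \<in> {lam_min N s..<pi/2}" "y \<in> {lam_min N s..<pi/2}" "x < y"
    then show "t0 N s x \<noteq> t0 N s y"
      using decreasing[of x y] by simp
  qed
  ultimately show ?thesis
    using decreasing unfolding lam_min_def[symmetric] by auto
qed

end
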